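(* The rotated terminal-set problem $\bar{\mathbb{P}}_T(x,\theta)$ is recursively feasible (under the terminal control law assumption below) and has the same set of minimizers as $\mathbb{P}_T(x,\theta)$.
   Context: Setting: $\mathcal{N}=\{1,\dots,\nu\}$; $\{\theta_k\}$ a time-homogeneous, irreducible, aperiodic Markov chain on $\mathcal{N}$ with transition matrix $P=(p_{ij})$ on a filtered probability space $(\Omega,\mathfrak{F},\{\mathfrak{F}_k\},\mathbb{P})$, $\mathfrak{F}_k$ generated by the history up to time $k$; system $x_{k+1}=f(x_k,u_k,\theta_k)$, with $x_k,\theta_k$ measured at time $k$; constraints $(x_k,u_k)\in Y_{\theta_k}$ ($Y_\theta$ nonempty compact); stage cost $\ell$, each $\ell(\cdot,\cdot,\theta)$ nonnegative, lower semicontinuous, level-bounded in $u$ locally uniformly in $x$; $f(\cdot,\cdot,\theta)$ continuous. $u\lhd\mathfrak{F}_k$ means $\mathfrak{F}_k$-measurable. Common optimal steady state $(x_s,u_s)=(0,0)$ for all modes with optimal steady-state cost $\ell_s$. A function $\lambda:\mathbb{R}^n\times\mathcal{N}\to\mathbb{R}$ (storage function of a stochastic dissipativity inequality) is given with $\lambda(x_s,\theta)=\lambda_s$ independent of $\theta$; terminal penalty $V_f:\mathbb{R}^n\times\mathcal{N}\to\mathbb{R}$ with $V_f(x_s,\theta)=V_f(x_s)$ independent of $\theta$. Define $\mathcal{L}\lambda(x_k,\theta_k):=\mathbb{E}[\lambda(x_{k+1},\theta_{k+1})-\lambda(x_k,\theta_k)\mid\mathfrak{F}_k]$ with $x_{k+1}=f(x_k,u_k,\theta_k)$,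 the rotated stage cost $L(x_k,u_k,\theta_k):=\ell(x_k,u_k,\theta_k)-\mathcal{L}\lambda(x_k,\theta_k)$, and the rotated terminal function $\tilde V_f(x,\theta):=V_f(x,\theta)+\lambda(x,\theta)-V_f(x_s)-\lambda_s$. Terminal control law assumption: there exist $\kappa_f$ and sets $X^f=\{X^f_i\}$ UPI for the constrained system in closed loop with $\kappa_f$ (i.e. $x_k\in X^f_{\theta_k}$ implies $x_{k+1}\in X^f_{\theta_{k+1}}$, constraints satisfied). $\mathbb{P}_T(x,\theta)$: minimize $\mathbb{E}[V_f(x_N,\theta_N)+\sum_{j=0}^{N-1}\ell(x_j,u_j,\theta_j)\mid\mathfrak{F}_0]$ over $(u_0,\dots,u_{N-1})$ subject to $x_{k+1}=f(x_k,u_k,\theta_k)$, $(x_k,u_k)\in Y_{\theta_k}$, $(x_0,\theta_0)=(x,\theta)$, $x_N\in X^f_{\theta_N}$, $u_k\lhd\mathfrak{F}_k$. $\bar{\mathbb{P}}_T(x,\theta)$: minimize $\mathbb{E}[\tilde V_f(x_N,\theta_N)+\sum_{j=0}^{N-1}L(x_j,u_j,\theta_j)\mid\mathfrak{F}_0]$ subject to the same constraints. *)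

theory Defs
  imports "HOL-Analysis.Analysis"
begin

fun mpow :: "('s::finite \<Rightarrow> 's \<Rightarrow> real) \<Rightarrow> nat \<Rightarrow> 's \<Rightarrow> 's \<Rightarrow> real" where
  "mpow P 0 i j = (if i = j then 1 else 0)"
| "mpow P (Suc n) i j = (\<Sum>k\<in>UNIV. mpow P n i k * P k j)"

definition stochastic_matrix :: "('s::finite \<Rightarrow> 's \<Rightarrow> real) \<Rightarrow> bool" where
  "stochastic_matrix P \<longleftrightarrow> (\<forall>i j. 0 \<le> P i j) \<and> (\<forall>i. (\<Sum>j\<in>UNIV. P i j) = 1)"

definition irreducible_chain :: "('s::finite \<Rightarrow> 's \<Rightarrow> real) \<Rightarrow> bool" where
  "irreducible_chain P \<longleftrightarrow> (\<forall>i j. \<exists>n>0. mpow P n i j > 0)"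

definition aperiodic_chain :: "('s::finite \<Rightarrow> 's \<Rightarrow> real) \<Rightarrow> bool" where
  "aperiodic_chain P \<longleftrightarrow> (\<forall>i. Gcd {n. n > 0 \<and> mpow P n i i > 0} = (1::nat))"

definition lsc :: "('a::topological_space \<Rightarrow> real) \<Rightarrow> bool" where
  "lsc g \<longleftrightarrow> (\<forall>x. \<forall>y < g x. eventually (\<lambda>z. y < g z) (at x))"

(* level-bounded in u locally uniformly in x (Rockafellar-Wets) *)
definition level_bounded_loc_unif ::
    "('a::metric_space \<Rightarrow> 'b::real_normed_vector \<Rightarrow> real) \<Rightarrow> bool" where
  "level_bounded_loc_unif g \<longleftrightarrow>
     (\<forall>x \<alpha>. \<exists>e>0. bounded {u. \<exists>x'\<in>ball x e. g x' u \<le> \<alpha>})"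

definition mode_paths :: "nat \<Rightarrow> 's \<Rightarrow> 's list set" where
  "mode_paths N \<theta> = {ts. length ts = Suc N \<and> hd ts = \<theta>}"

definition path_prob :: "('s \<Rightarrow> 's \<Rightarrow> real) \<Rightarrow> 's list \<Rightarrow> real" where
  "path_prob P ts = (\<Prod>j<length ts - 1. P (ts ! j) (ts ! Suc j))"

(* A control policy: u k hs is the input at time k given the mode history hs = [theta_0..theta_k];
   this is exactly an F_k-measurable input (x_0 being fixed, F_k is generated by theta_0..theta_k). *)
type_synonym ('s,'m) policy = "nat \<Rightarrow> 's list \<Rightarrow> 'm"

fun traj :: "('n \<Rightarrow> 'm \<Rightarrow> 's \<Rightarrow> 'n) \<Rightarrow> 'n \<Rightarrow> ('s,'m) policy \<Rightarrow> 's list \<Rightarrow> nat \<Rightarrow> 'n" where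
  "traj f x u ts 0 = x"
| "traj f x u ts (Suc k) = f (traj f x u ts k) (u k (take (Suc k) ts)) (ts ! k)"

(* feasibility of a policy: constraints and terminal constraint hold almost surely *)
definition admissible ::
    "('s::finite \<Rightarrow> 's \<Rightarrow> real) \<Rightarrow> ('n \<Rightarrow> 'm \<Rightarrow> 's \<Rightarrow> 'n) \<Rightarrow> ('s \<Rightarrow> ('n \<times> 'm) set)
     \<Rightarrow> ('s \<Rightarrow> 'n set) \<Rightarrow> nat \<Rightarrow> 'n \<Rightarrow> 's \<Rightarrow> ('s,'m) policy \<Rightarrow> bool" where
  "admissible P f Y Xf N x \<theta> u \<longleftrightarrow>
     (\<forall>ts\<in>mode_paths N \<theta>. path_prob P ts > 0 \<longrightarrow>
        (\<forall>k<N. (traj f x u ts k, u k (take (Suc k) ts)) \<in> Y (ts ! k))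
        \<and> traj f x u ts N \<in> Xf (ts ! N))"

definition exp_cost ::
    "('s::finite \<Rightarrow> 's \<Rightarrow> real) \<Rightarrow> ('n \<Rightarrow> 'm \<Rightarrow> 's \<Rightarrow> 'n) \<Rightarrow> ('n \<Rightarrow> 'm \<Rightarrow> 's \<Rightarrow> real)
     \<Rightarrow> ('n \<Rightarrow> 's \<Rightarrow> real) \<Rightarrow> nat \<Rightarrow> 'n \<Rightarrow> 's \<Rightarrow> ('s,'m) policy \<Rightarrow> real" where
  "exp_cost P f stage Vf N x \<theta> u =
     (\<Sum>ts\<in>mode_paths N \<theta>. path_prob P ts *
        (Vf (traj f x u ts N) (ts ! N)
         + (\<Sum>j<N. stage (traj f x u ts j) (u j (take (Suc j) ts)) (ts ! j))))"

definition minimizers ::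
    "('s::finite \<Rightarrow> 's \<Rightarrow> real) \<Rightarrow> ('n \<Rightarrow> 'm \<Rightarrow> 's \<Rightarrow> 'n) \<Rightarrow> ('s \<Rightarrow> ('n \<times> 'm) set)
     \<Rightarrow> ('s \<Rightarrow> 'n set) \<Rightarrow> ('n \<Rightarrow> 'm \<Rightarrow> 's \<Rightarrow> real) \<Rightarrow> ('n \<Rightarrow> 's \<Rightarrow> real)
     \<Rightarrow> nat \<Rightarrow> 'n \<Rightarrow> 's \<Rightarrow> ('s,'m) policy set" where
  "minimizers P f Y Xf stage Vf N x \<theta> =
     {u. admissible P f Y Xf N x \<theta> u \<and>
         (\<forall>v. admissible P f Y Xf N x \<theta> v \<longrightarrow>
              exp_cost P f stage Vf N x \<theta> u \<le> exp_cost P f stage Vf N x \<theta> v)}"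

(* L lambda (x,theta) = E[lambda(x_{k+1},theta_{k+1}) - lambda(x_k,theta_k) | F_k] *)
definition gen_L ::
    "('s::finite \<Rightarrow> 's \<Rightarrow> real) \<Rightarrow> ('n \<Rightarrow> 'm \<Rightarrow> 's \<Rightarrow> 'n) \<Rightarrow> ('n \<Rightarrow> 's \<Rightarrow> real)
     \<Rightarrow> 'n \<Rightarrow> 'm \<Rightarrow> 's \<Rightarrow> real" where
  "gen_L P f lam x u \<theta> = (\<Sum>j\<in>UNIV. P \<theta> j * lam (f x u \<theta>) j) - lam x \<theta>"

definition rot_stage ::
    "('s::finite \<Rightarrow> 's \<Rightarrow> real) \<Rightarrow> ('n \<Rightarrow> 'm \<Rightarrow> 's \<Rightarrow> 'n) \<Rightarrow> ('n \<Rightarrow> 'm \<Rightarrow> 's \<Rightarrow> real)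
     \<Rightarrow> ('n \<Rightarrow> 's \<Rightarrow> real) \<Rightarrow> 'n \<Rightarrow> 'm \<Rightarrow> 's \<Rightarrow> real" where
  "rot_stage P f l lam x u \<theta> = l x u \<theta> - gen_L P f lam x u \<theta>"

definition rot_term :: "('n \<Rightarrow> 's \<Rightarrow> real) \<Rightarrow> ('n \<Rightarrow> 's \<Rightarrow> real) \<Rightarrow> real \<Rightarrow> real \<Rightarrow> 'n \<Rightarrow> 's \<Rightarrow> real" where
  "rot_term Vf lam Vfs lams x \<theta> = Vf x \<theta> + lam x \<theta> - Vfs - lams"

end

theory Submission
  imports Defs
begin

text \<open>Recursive feasibility: drop the first input of an admissible policy, shift the rest by one
step, and append one step of the terminal control law, which keeps the state in the terminal
sets by their invariance. Equal minimizers: along every mode path the storage terms of the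
rotation telescope, and the conditional expectations inside the rotated stage cost cancel in
expectation against the realised next storage values (tower property). Hence the rotated cost
of every policy is the original cost plus the constant \<open>\<lambda>(x,\<theta>) - V\<^sub>f(x\<^sub>s) - \<lambda>\<^sub>s\<close>.\<close>

lemma traj_take: "j \<le> m \<Longrightarrow> traj f x u (take m ts) j = traj f x u ts j"
  by (induction j) (auto simp: min_def)

lemma path_prob_pos_iff:
  assumes "\<And>i j. 0 \<le> P i j"
  shows "path_prob P ts > 0 \<longleftrightarrow> (\<forall>j < length ts - 1. P (ts ! j) (ts ! Suc j) > 0)"
proof
  assume pos: "path_prob P ts > 0"
  show "\<forall>j < length ts - 1. P (ts ! j) (ts ! Suc j) > 0"
  proof (intro allI impI)
    fix j assume "j < length ts - 1"
    then have "P (ts ! j) (ts ! Suc j) \<noteq> 0"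
      using pos unfolding path_prob_def by (metis finite_lessThan lessThan_iff less_irrefl prod_zero_iff)
    then show "P (ts ! j) (ts ! Suc j) > 0"
      using assms[of "ts ! j" "ts ! Suc j"] by linarith
  qed
next
  assume "\<forall>j < length ts - 1. P (ts ! j) (ts ! Suc j) > 0"
  then show "path_prob P ts > 0"
    unfolding path_prob_def by (intro prod_pos) auto
qed

lemma path_prob_snoc:
  assumes "ts \<noteq> []"
  shows "path_prob P (ts @ [i]) = path_prob P ts * P (last ts) i"
proof -
  obtain m where m: "length ts = Suc m"
    using assms by (cases ts) auto
  have "path_prob P (ts @ [i])
      = (\<Prod>j<m. P ((ts @ [i]) ! j) ((ts @ [i]) ! Suc j)) * P ((ts @ [i]) ! m) ((ts @ [i]) ! Suc m)"
    unfolding path_prob_def using m by simp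
  also have "(\<Prod>j<m. P ((ts @ [i]) ! j) ((ts @ [i]) ! Suc j)) = path_prob P ts"
    unfolding path_prob_def using m by (intro prod.cong) (auto simp: nth_append)
  also have "P ((ts @ [i]) ! m) ((ts @ [i]) ! Suc m) = P (last ts) i"
    using m assms by (simp add: nth_append last_conv_nth)
  finally show ?thesis .
qed

lemma mode_paths_Suc:
  "mode_paths (Suc k) \<theta> = (\<lambda>(ts, i). ts @ [i]) ` (mode_paths k \<theta> \<times> UNIV)"
proof (intro set_eqI iffI)
  fix ts assume "ts \<in> mode_paths (Suc k) \<theta>"
  then have len: "length ts = Suc (Suc k)" and hd: "hd ts = \<theta>"
    by (auto simp: mode_paths_def)
  then have split: "ts = butlast ts @ [last ts]" and "butlast ts \<noteq> []"
    by (cases ts; auto)+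
  then have "hd (butlast ts) = \<theta>"
    using hd by (metis hd_append2)
  then show "ts \<in> (\<lambda>(ts, i). ts @ [i]) ` (mode_paths k \<theta> \<times> UNIV)"
    using len split by (auto simp: mode_paths_def intro!: image_eqI[where x="(butlast ts, last ts)"])
qed (auto simp: mode_paths_def hd_append)

lemma sum_mode_paths_Suc:
  "(\<Sum>ts\<in>mode_paths (Suc k) \<theta>. H ts) = (\<Sum>ts\<in>mode_paths k \<theta>. \<Sum>i\<in>UNIV. H (ts @ [i]))"
proof -
  have inj: "inj_on (\<lambda>(ts, i). ts @ [i]) (mode_paths k \<theta> \<times> UNIV)"
    by (auto simp: inj_on_def)
  show ?thesis
    unfolding mode_paths_Suc sum.reindex[OF inj] sum.cartesian_product
    by (simp add: case_prod_beta)
qed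

lemma sum_mode_paths_take:
  assumes "stochastic_matrix (P :: 's::finite \<Rightarrow> 's \<Rightarrow> real)" and "k \<le> n"
  shows "(\<Sum>ts\<in>mode_paths n \<theta>. path_prob P ts * F (take (Suc k) ts))
       = (\<Sum>ts\<in>mode_paths k \<theta>. path_prob P ts * F ts)"
  using \<open>k \<le> n\<close>
proof (induction n)
  case 0
  then show ?case by (intro sum.cong) (auto simp: mode_paths_def)
next
  case (Suc n)
  show ?case
  proof (cases "k = Suc n")
    case True
    then show ?thesis by (intro sum.cong) (auto simp: mode_paths_def)
  next
    case False
    then have "k \<le> n" using Suc.prems by simp
    have step: "(\<Sum>i\<in>UNIV. path_prob P (ts @ [i]) * F (take (Suc k) (ts @ [i])))
        = path_prob P ts * F (take (Suc k) ts)" if "ts \<in> mode_paths n \<theta>" for ts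
    proof -
      have "length ts = Suc n" using that by (simp add: mode_paths_def)
      moreover from this have "ts \<noteq> []" by auto
      ultimately have "(\<Sum>i\<in>UNIV. path_prob P (ts @ [i]) * F (take (Suc k) (ts @ [i])))
          = path_prob P ts * F (take (Suc k) ts) * (\<Sum>i\<in>UNIV. P (last ts) i)"
        using \<open>k \<le> n\<close> by (simp add: path_prob_snoc sum_distrib_left mult_ac)
      then show ?thesis
        using assms(1) by (simp add: stochastic_matrix_def)
    qed
    show ?thesis
      unfolding sum_mode_paths_Suc using step Suc.IH[OF \<open>k \<le> n\<close>] by simp
  qed
qed

lemma sum_path_prob_eq_1:
  assumes "stochastic_matrix (P :: 's::finite \<Rightarrow> 's \<Rightarrow> real)"
  shows "(\<Sum>ts\<in>mode_paths N \<theta>. path_prob P ts) = 1"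
proof -
  have "mode_paths 0 \<theta> = {[\<theta>]}"
    by (auto simp: mode_paths_def length_Suc_conv)
  then show ?thesis
    using sum_mode_paths_take[OF assms, where k=0 and n=N and F="\<lambda>_. 1"] by (simp add: path_prob_def)
qed

text \<open>The tower property behind \<open>gen_L\<close>: \<open>g\<close> may depend on the history up to time \<open>j\<close>.\<close>

lemma sum_mode_paths_next_mode:
  assumes "stochastic_matrix (P :: 's::finite \<Rightarrow> 's \<Rightarrow> real)" and "j < N"
  shows "(\<Sum>ts\<in>mode_paths N \<theta>. path_prob P ts * (\<Sum>i\<in>UNIV. P (ts ! j) i * g (take (Suc j) ts) i))
       = (\<Sum>ts\<in>mode_paths N \<theta>. path_prob P ts * g (take (Suc j) ts) (ts ! Suc j))"
proof -
  define F where "F hs = (\<Sum>i\<in>UNIV. P (last hs) i * g hs i)" for hs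
  define G where "G hs = g (butlast hs) (last hs)" for hs
  have F: "(\<Sum>i\<in>UNIV. P (ts ! j) i * g (take (Suc j) ts) i) = F (take (Suc j) ts)"
    if "ts \<in> mode_paths N \<theta>" for ts
    using that \<open>j < N\<close> by (simp add: F_def mode_paths_def take_Suc_conv_app_nth)
  have G: "g (take (Suc j) ts) (ts ! Suc j) = G (take (Suc (Suc j)) ts)"
    if "ts \<in> mode_paths N \<theta>" for ts
  proof -
    have "Suc j < length ts" using that \<open>j < N\<close> by (simp add: mode_paths_def)
    then have "take (Suc (Suc j)) ts = take (Suc j) ts @ [ts ! Suc j]"
      by (rule take_Suc_conv_app_nth)
    then show ?thesis by (simp add: G_def)
  qed
  have snoc: "path_prob P ts * F ts = (\<Sum>i\<in>UNIV. path_prob P (ts @ [i]) * G (ts @ [i]))"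
    if "ts \<in> mode_paths j \<theta>" for ts
  proof -
    have "ts \<noteq> []" using that by (auto simp: mode_paths_def)
    then show ?thesis by (simp add: F_def G_def path_prob_snoc sum_distrib_left mult_ac)
  qed
  have "(\<Sum>ts\<in>mode_paths N \<theta>. path_prob P ts * F (take (Suc j) ts))
      = (\<Sum>ts\<in>mode_paths j \<theta>. path_prob P ts * F ts)"
    using assms by (intro sum_mode_paths_take) auto
  also have "\<dots> = (\<Sum>ts\<in>mode_paths (Suc j) \<theta>. path_prob P ts * G ts)"
    unfolding sum_mode_paths_Suc using snoc by simp
  also have "\<dots> = (\<Sum>ts\<in>mode_paths N \<theta>. path_prob P ts * G (take (Suc (Suc j)) ts))"
    using assms by (intro sum_mode_paths_take[symmetric]) auto
  finally show ?thesis
    using F G by (simp cong: sum.cong)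
qed

lemma path_cost_rotated:
  assumes "ts \<in> mode_paths N \<theta>"
  shows "rot_term Vf lam Vfs lams (traj f x u ts N) (ts ! N)
      + (\<Sum>j<N. rot_stage P f l lam (traj f x u ts j) (u j (take (Suc j) ts)) (ts ! j))
    = Vf (traj f x u ts N) (ts ! N) + (\<Sum>j<N. l (traj f x u ts j) (u j (take (Suc j) ts)) (ts ! j))
      + (lam x \<theta> - Vfs - lams)
      + (\<Sum>j<N. lam (traj f x u ts (Suc j)) (ts ! Suc j)
               - (\<Sum>i\<in>UNIV. P (ts ! j) i * lam (traj f x u ts (Suc j)) i))"
proof -
  have "ts ! 0 = \<theta>"
    using assms by (cases ts) (auto simp: mode_paths_def)
  moreover have "(\<Sum>j<N. lam (traj f x u ts j) (ts ! j) - lam (traj f x u ts (Suc j)) (ts ! Suc j))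
      = lam (traj f x u ts 0) (ts ! 0) - lam (traj f x u ts N) (ts ! N)"
    by (rule sum_lessThan_telescope')
  moreover have "f (traj f x u ts j) (u j (take (Suc j) ts)) (ts ! j) = traj f x u ts (Suc j)" for j
    by simp
  ultimately show ?thesis
    by (simp add: rot_term_def rot_stage_def gen_L_def sum_subtractf sum.distrib algebra_simps
             del: traj.simps(2))
qed

lemma exp_cost_rotated:
  assumes sto: "stochastic_matrix (P :: 's::finite \<Rightarrow> 's \<Rightarrow> real)"
  shows "exp_cost P f (rot_stage P f l lam) (rot_term Vf lam Vfs lams) N x \<theta> u
       = exp_cost P f l Vf N x \<theta> u + (lam x \<theta> - Vfs - lams)"
proof -
  define B where "B ts j = lam (traj f x u ts (Suc j)) (ts ! Suc j)" for ts j
  define A where "A ts j = (\<Sum>i\<in>UNIV. P (ts ! j) i * lam (traj f x u ts (Suc j)) i)" for ts j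
  have cancel: "(\<Sum>ts\<in>mode_paths N \<theta>. path_prob P ts * B ts j)
      = (\<Sum>ts\<in>mode_paths N \<theta>. path_prob P ts * A ts j)" if "j < N" for j
  proof -
    have "traj f x u ts (Suc j) = traj f x u (take (Suc j) ts) (Suc j)" for ts
      by (simp add: traj_take)
    then show ?thesis
      unfolding A_def B_def
      using sum_mode_paths_next_mode[OF sto that, where \<theta>=\<theta> and g="\<lambda>hs. lam (traj f x u hs (Suc j))"]
      by (simp del: traj.simps)
  qed
  have "exp_cost P f (rot_stage P f l lam) (rot_term Vf lam Vfs lams) N x \<theta> u
      = exp_cost P f l Vf N x \<theta> u
        + (\<Sum>ts\<in>mode_paths N \<theta>. path_prob P ts) * (lam x \<theta> - Vfs - lams)
        + (\<Sum>j<N. (\<Sum>ts\<in>mode_paths N \<theta>. path_prob P ts * B ts j)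
                 - (\<Sum>ts\<in>mode_paths N \<theta>. path_prob P ts * A ts j))"
    unfolding exp_cost_def
    by (simp add: path_cost_rotated A_def B_def algebra_simps sum_distrib_left
        sum_distrib_right sum.distrib sum_subtractf sum.swap[of _ "{..<N}"] cong: sum.cong
        del: traj.simps(2))
  then show ?thesis
    using cancel by (simp add: sum_path_prob_eq_1[OF sto])
qed

lemma minimizers_cost_shift:
  assumes "\<And>u. exp_cost P f stage' Vf' N x \<theta> u = exp_cost P f stage Vf N x \<theta> u + c"
  shows "minimizers P f Y Xf stage' Vf' N x \<theta> = minimizers P f Y Xf stage Vf N x \<theta>"
  unfolding minimizers_def assms by simp

lemma admissible_tail:
  assumes sto: "stochastic_matrix P"
    and adm: "admissible P f Y Xf (Suc M) x \<theta> u" and "P \<theta> \<theta>' > 0"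
  shows "admissible P f Y Xf M (f x (u 0 [\<theta>]) \<theta>) \<theta>' (\<lambda>k hs. u (Suc k) (\<theta> # hs))"
  unfolding admissible_def
proof (intro ballI impI)
  fix ts assume ts: "ts \<in> mode_paths M \<theta>'" and "path_prob P ts > 0"
  have nonneg: "\<And>i j. 0 \<le> P i j" using sto by (simp add: stochastic_matrix_def)
  have "ts ! 0 = \<theta>'" "length ts = Suc M"
    using ts by (cases ts; auto simp: mode_paths_def)+
  then have "\<forall>j < length (\<theta> # ts) - 1. P ((\<theta> # ts) ! j) ((\<theta> # ts) ! Suc j) > 0"
    using \<open>path_prob P ts > 0\<close> \<open>P \<theta> \<theta>' > 0\<close>
    by (auto simp: path_prob_pos_iff[OF nonneg] less_Suc_eq_0_disj)
  then have "path_prob P (\<theta> # ts) > 0"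
    by (simp add: path_prob_pos_iff[OF nonneg])
  moreover have "\<theta> # ts \<in> mode_paths (Suc M) \<theta>"
    using ts by (simp add: mode_paths_def)
  ultimately have Y: "\<forall>k<Suc M. (traj f x u (\<theta> # ts) k, u k (take (Suc k) (\<theta> # ts))) \<in> Y ((\<theta> # ts) ! k)"
    and Xf: "traj f x u (\<theta> # ts) (Suc M) \<in> Xf ((\<theta> # ts) ! Suc M)"
    using adm unfolding admissible_def by blast+
  have shift: "traj f (f x (u 0 [\<theta>]) \<theta>) (\<lambda>k hs. u (Suc k) (\<theta> # hs)) ts k
      = traj f x u (\<theta> # ts) (Suc k)" for k
    by (induction k) simp_all
  have Y_Suc: "(traj f x u (\<theta> # ts) (Suc k), u (Suc k) (\<theta> # take (Suc k) ts)) \<in> Y (ts ! k)"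
    if "k < M" for k
    using Y[rule_format, of "Suc k"] that by (simp del: traj.simps(2))
  show "(\<forall>k<M. (traj f (f x (u 0 [\<theta>]) \<theta>) (\<lambda>k hs. u (Suc k) (\<theta> # hs)) ts k,
                         u (Suc k) (\<theta> # take (Suc k) ts)) \<in> Y (ts ! k))
      \<and> traj f (f x (u 0 [\<theta>]) \<theta>) (\<lambda>k hs. u (Suc k) (\<theta> # hs)) ts M \<in> Xf (ts ! M)"
    using Y_Suc Xf by (simp add: shift del: traj.simps(2))
qed

lemma admissible_Suc_terminal_law:
  assumes sto: "stochastic_matrix P"
    and term_UPI: "\<And>x \<theta>. x \<in> Xf \<theta> \<Longrightarrow>
        (x, \<kappa>f x \<theta>) \<in> Y \<theta> \<and> (\<forall>\<theta>'. P \<theta> \<theta>' > 0 \<longrightarrow> f x (\<kappa>f x \<theta>) \<theta> \<in> Xf \<theta>')"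
    and adm: "admissible P f Y Xf M x \<theta> w"
  shows "admissible P f Y Xf (Suc M) x \<theta>
           (\<lambda>k hs. if k < M then w k hs else \<kappa>f (traj f x w hs k) (hs ! k))"
    (is "admissible _ _ _ _ _ _ _ ?v")
  unfolding admissible_def
proof (intro ballI impI)
  fix ts assume ts: "ts \<in> mode_paths (Suc M) \<theta>" and pos: "path_prob P ts > 0"
  have nonneg: "\<And>i j. 0 \<le> P i j" using sto by (simp add: stochastic_matrix_def)
  have len: "length ts = Suc (Suc M)" using ts by (simp add: mode_paths_def)
  have trans_pos: "P (ts ! j) (ts ! Suc j) > 0" if "j \<le> M" for j
    using pos that len by (simp add: path_prob_pos_iff[OF nonneg])
  define ts' where "ts' = take (Suc M) ts"
  have "ts' \<in> mode_paths M \<theta>" "path_prob P ts' > 0"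
    using ts len trans_pos by (auto simp: ts'_def mode_paths_def path_prob_pos_iff[OF nonneg])
  then have adm': "\<forall>k<M. (traj f x w ts' k, w k (take (Suc k) ts')) \<in> Y (ts' ! k)"
      "traj f x w ts' M \<in> Xf (ts' ! M)"
    using adm unfolding admissible_def by blast+
  have traj_v: "traj f x ?v ts k = traj f x w ts k" if "k \<le> M" for k
    using that by (induction k) simp_all
  have xM: "traj f x ?v ts M \<in> Xf (ts ! M)"
    using adm'(2) by (simp add: ts'_def traj_take traj_v del: traj.simps(2))
  have vM: "?v M (take (Suc M) ts) = \<kappa>f (traj f x ?v ts M) (ts ! M)"
    by (simp add: traj_take traj_v del: traj.simps(2))
  show "(\<forall>k<Suc M. (traj f x ?v ts k, ?v k (take (Suc k) ts)) \<in> Y (ts ! k))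
        \<and> traj f x ?v ts (Suc M) \<in> Xf (ts ! Suc M)"
  proof (intro conjI allI impI)
    fix k assume "k < Suc M"
    then consider "k < M" | "k = M" by linarith
    then show "(traj f x ?v ts k, ?v k (take (Suc k) ts)) \<in> Y (ts ! k)"
    proof cases
      case 1
      then show ?thesis
        using adm'(1) by (simp add: ts'_def traj_take traj_v min_def del: traj.simps(2))
    next
      case 2
      then show ?thesis using term_UPI[OF xM] vM by simp
    qed
  next
    have "traj f x ?v ts (Suc M) = f (traj f x ?v ts M) (\<kappa>f (traj f x ?v ts M) (ts ! M)) (ts ! M)"
      by (simp only: traj.simps(2) vM)
    then show "traj f x ?v ts (Suc M) \<in> Xf (ts ! Suc M)"
      using term_UPI[OF xM] trans_pos[of M] by (simp del: traj.simps(2))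
  qed
qed

theorem theorem4:
  fixes P :: "'s::finite \<Rightarrow> 's \<Rightarrow> real"
    and f :: "real^'n \<Rightarrow> real^'m \<Rightarrow> 's \<Rightarrow> real^'n"
    and Y :: "'s \<Rightarrow> ((real^'n) \<times> (real^'m)) set"
    and l :: "real^'n \<Rightarrow> real^'m \<Rightarrow> 's \<Rightarrow> real"
    and lam Vf :: "real^'n \<Rightarrow> 's \<Rightarrow> real"
    and lams Vfs ls :: real
    and \<kappa>f :: "real^'n \<Rightarrow> 's \<Rightarrow> real^'m"
    and Xf :: "'s \<Rightarrow> (real^'n) set"
  assumes chain: "stochastic_matrix P" "irreducible_chain P" "aperiodic_chain P"
    and Y_cpt: "\<And>\<theta>. compact (Y \<theta>) \<and> Y \<theta> \<noteq> {}"
    and f_cont: "\<And>\<theta>. continuous_on UNIV (\<lambda>(x,u). f x u \<theta>)"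
    and l_nonneg: "\<And>x u \<theta>. 0 \<le> l x u \<theta>"
    and l_lsc: "\<And>\<theta>. lsc (\<lambda>(x,u). l x u \<theta>)"
    and l_lb: "\<And>\<theta>. level_bounded_loc_unif (\<lambda>x u. l x u \<theta>)"
    and steady: "\<And>\<theta>. f 0 0 \<theta> = 0 \<and> (0, 0) \<in> Y \<theta>"
    and dissip: "\<And>x u \<theta>. (x, u) \<in> Y \<theta> \<Longrightarrow> gen_L P f lam x u \<theta> \<le> l x u \<theta> - ls"
    and lam_s: "\<And>\<theta>. lam 0 \<theta> = lams"
    and Vf_s: "\<And>\<theta>. Vf 0 \<theta> = Vfs"
    and term_UPI: "\<And>x \<theta>. x \<in> Xf \<theta> \<Longrightarrow>
        (x, \<kappa>f x \<theta>) \<in> Y \<theta> \<and> (\<forall>\<theta>'. P \<theta> \<theta>' > 0 \<longrightarrow> f x (\<kappa>f x \<theta>) \<theta> \<in> Xf \<theta>')"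
  shows
    "(\<forall>N x \<theta> u. 0 < N \<longrightarrow> admissible P f Y Xf N x \<theta> u \<longrightarrow>
        (\<forall>\<theta>'. P \<theta> \<theta>' > 0 \<longrightarrow>
           (\<exists>v. admissible P f Y Xf N (f x (u 0 [\<theta>]) \<theta>) \<theta>' v)))
     \<and> (\<forall>N x \<theta>.
          minimizers P f Y Xf (rot_stage P f l lam) (rot_term Vf lam Vfs lams) N x \<theta>
          = minimizers P f Y Xf l Vf N x \<theta>)"
proof (intro conjI allI impI)
  fix N x \<theta> u \<theta>'
  assume "0 < N" and adm: "admissible P f Y Xf N x \<theta> u" and pos: "P \<theta> \<theta>' > 0"
  then obtain M where N: "N = Suc M"
    by (cases N) auto
  have "admissible P f Y Xf M (f x (u 0 [\<theta>]) \<theta>) \<theta>' (\<lambda>k hs. u (Suc k) (\<theta> # hs))"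
    using admissible_tail[OF chain(1) adm[unfolded N] pos] .
  then show "\<exists>v. admissible P f Y Xf N (f x (u 0 [\<theta>]) \<theta>) \<theta>' v"
    unfolding N by (blast intro: admissible_Suc_terminal_law[where Xf=Xf and \<kappa>f=\<kappa>f and Y=Y and f=f, OF chain(1) term_UPI])
next
  fix N x \<theta>
  show "minimizers P f Y Xf (rot_stage P f l lam) (rot_term Vf lam Vfs lams) N x \<theta>
      = minimizers P f Y Xf l Vf N x \<theta>"
    by (rule minimizers_cost_shift) (rule exp_cost_rotated[OF chain(1)])
qed

end
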